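(* For a rearrangement $\tau:\mathcal D\to\mathcal D$ with induced operator $Th_I=h_{\tau(I)}$, the following are equivalent: (i) $T:\mathrm{BMO}\to\mathrm{BMO}$ is bounded; (ii) there exists $M\ge1$ such that $[\![\tau(\mathcal E)]\!]\le M[\![\mathcal E]\!]$ for every $\mathcal E\subset\mathcal D$; (iii) there exists $M\ge1$ such that $[\![\tau(\mathcal E)]\!]\le M$ for every $\mathcal E\subset\mathcal D$ with $[\![\mathcal E]\!]\le 4$.
   Context: $\mathcal D$ is the collection of dyadic subintervals of $[0,1]$; a rearrangement is an injective map $\tau:\mathcal D\to\mathcal D$. $h_I$ is the $L^\infty$-normalized Haar function ($1$ on the left half of $I$, $-1$ on the right half, $0$ outside). For $x=\sum x_Ih_I$, $\|x\|=\sup_{J\in\mathcal D}\big(\frac1{|J|}\sum_{I\subseteq J}x_I^2|I|\big)^{1/2}$; $\mathrm{BMO}=\{x:\|x\|<\infty\}$ (dyadic BMO). For $\mathcal L\subset\mathcal D$, $[\![\mathcal L]\!]=\sup_{J\in\mathcal D}\frac1{|J|}\sum_{I\in\mathcal L,I\subseteq J}|I|$. *)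

theory Defs
  imports "HOL-Analysis.Analysis"
begin

text \<open>Dyadic subintervals of [0,1]: the pair (n,k) with k < 2^n stands for
  the interval [k/2^n, (k+1)/2^n) of length 2^(-n).\<close>

type_synonym dint = "nat \<times> nat"

definition dyadic :: "dint set" where
  "dyadic = {(n, k). k < 2 ^ n}"

definition dlen :: "dint \<Rightarrow> real" where
  "dlen I = (1 / 2) ^ fst I"

definition dsub :: "dint \<Rightarrow> dint \<Rightarrow> bool" where
  "dsub I J \<longleftrightarrow> fst J \<le> fst I \<and> snd I div 2 ^ (fst I - fst J) = snd J"

definition ennsqrt :: "ennreal \<Rightarrow> ennreal" where
  "ennsqrt e = (if e = \<infinity> then \<infinity> else ennreal (sqrt (enn2real e)))"

text \<open>An element x = sum x_I h_I is identified with its Haar coefficient function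
  (only values on dyadic matter). Dyadic BMO norm:
  sup over J of ((1/|J|) sum_{I subset J} x_I^2 |I|)^(1/2).\<close>
definition bmo_norm :: "(dint \<Rightarrow> real) \<Rightarrow> ennreal" where
  "bmo_norm x = (SUP J\<in>dyadic. ennsqrt
      ((\<integral>\<^sup>+ I. ennreal ((x I)\<^sup>2 * dlen I) \<partial>count_space {I \<in> dyadic. dsub I J})
        / ennreal (dlen J)))"

definition BMO :: "(dint \<Rightarrow> real) set" where
  "BMO = {x. bmo_norm x < \<infinity>}"

definition carleson :: "dint set \<Rightarrow> ennreal" where
  "carleson L = (SUP J\<in>dyadic.
      (\<integral>\<^sup>+ I. ennreal (dlen I) \<partial>count_space {I \<in> L \<inter> dyadic. dsub I J})
        / ennreal (dlen J))"

text \<open>Rearrangement operator T h_I = h_{tau(I)} acting on coefficient functions.\<close>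
definition rearr_op :: "(dint \<Rightarrow> dint) \<Rightarrow> (dint \<Rightarrow> real) \<Rightarrow> (dint \<Rightarrow> real)" where
  "rearr_op \<tau> x = (\<lambda>J. if J \<in> \<tau> ` dyadic then x (inv_into dyadic \<tau> J) else 0)"

end

theory Submission
  imports Defs
begin

(*
  (i) implies (ii): the BMO norm of the indicator of E is the square root of the Carleson
  constant of E, and T maps that indicator to the indicator of tau(E). (ii) implies (iii)
  trivially.

  (iii) implies (i): for x in BMO with norm b, the weights w_I = x_I^2 / b^2 have Carleson
  packing at most 1. Round N w_I down to an integer c_I and give each dyadic interval the
  block of c_I consecutive integers that follows the blocks of its ancestors. Sorting the
  intervals by the residue mod N of the integers in their blocks splits them into N
  subcollections; each I lies in c_I of them, and a chain of nested intervals meets each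
  subcollection at most (sum of its c_I)/N + 2 times, so every subcollection has Carleson
  constant at most 3. By (iii) the lengths of the images of each subcollection below J sum to
  at most M |J|; summing over the N classes and letting N grow gives
  sum_I w_I |tau(I)| <= M |J|, which is the BMO bound for T x with constant sqrt M.
*)

lemma nn_integral_count_space_le_iff:
  fixes f :: "'a \<Rightarrow> ennreal"
  assumes "countable A"
  shows "(\<integral>\<^sup>+x. f x \<partial>count_space A) \<le> B \<longleftrightarrow> (\<forall>F. finite F \<and> F \<subseteq> A \<longrightarrow> sum f F \<le> B)"
proof (intro iffI allI impI)
  fix F assume "(\<integral>\<^sup>+x. f x \<partial>count_space A) \<le> B" and F: "finite F \<and> F \<subseteq> A"
  have "sum f F = (\<integral>\<^sup>+x. f x * indicator F x \<partial>count_space UNIV)"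
    using F by (simp add: nn_integral_count_space_finite flip: nn_integral_count_space_indicator)
  also have "\<dots> \<le> (\<integral>\<^sup>+x. f x * indicator A x \<partial>count_space UNIV)"
    using F by (intro nn_integral_mono) (auto split: split_indicator)
  also have "\<dots> \<le> B"
    using \<open>(\<integral>\<^sup>+x. f x \<partial>count_space A) \<le> B\<close> by (simp flip: nn_integral_count_space_indicator)
  finally show "sum f F \<le> B" .
next
  assume finite_sums: "\<forall>F. finite F \<and> F \<subseteq> A \<longrightarrow> sum f F \<le> B"
  show "(\<integral>\<^sup>+x. f x \<partial>count_space A) \<le> B"
  proof (cases "finite A")
    case True
    then show ?thesis using finite_sums by (simp add: nn_integral_count_space_finite)
  next
    case False
    then have bij: "bij_betw (from_nat_into A) UNIV A"
      by (rule bij_betw_from_nat_into[OF assms])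
    have "(\<integral>\<^sup>+x. f x \<partial>count_space A) = (\<Sum>n. f (from_nat_into A n))"
      by (simp add: nn_integral_count_space_nat flip: nn_integral_bij_count_space[OF bij])
    also have "\<dots> \<le> B"
    proof (rule suminf_le_const)
      fix n
      have "inj_on (from_nat_into A) {..<n}"
        using bij by (meson bij_betw_def inj_on_subset subset_UNIV)
      then have "(\<Sum>i<n. f (from_nat_into A i)) = sum f (from_nat_into A ` {..<n})"
        by (simp add: sum.reindex)
      also have "\<dots> \<le> B" using bij finite_sums by (auto simp: bij_betw_def)
      finally show "(\<Sum>i<n. f (from_nat_into A i)) \<le> B" .
    qed simp
    finally show ?thesis .
  qed
qed

lemma ennreal_divide_le_iff: "0 < d \<Longrightarrow> a / ennreal d \<le> c \<longleftrightarrow> a \<le> c * ennreal d"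
  by (cases a; cases c)
    (auto simp: divide_ennreal ennreal_mult[symmetric] field_simps ennreal_top_divide top_unique ennreal_mult_top)

lemma ennsqrt_le_iff: "0 \<le> g \<Longrightarrow> ennsqrt e \<le> ennreal g \<longleftrightarrow> e \<le> ennreal (g\<^sup>2)"
  by (cases e) (auto simp: ennsqrt_def top_unique real_sqrt_le_iff' real_le_lsqrt sqrt_le_D)

lemma dlen_pos: "0 < dlen I"
  by (simp add: dlen_def)

lemma carleson_le_iff:
  assumes "0 \<le> c"
  shows "carleson X \<le> ennreal c \<longleftrightarrow>
    (\<forall>K\<in>dyadic. \<forall>F. finite F \<and> F \<subseteq> {I \<in> X \<inter> dyadic. dsub I K} \<longrightarrow> (\<Sum>I\<in>F. dlen I) \<le> c * dlen K)"
proof -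
  have "(\<Sum>I\<in>F. ennreal (dlen I)) \<le> ennreal c * ennreal (dlen K) \<longleftrightarrow> (\<Sum>I\<in>F. dlen I) \<le> c * dlen K"
    for F K using assms dlen_pos[of K]
    by (simp add: sum_ennreal less_imp_le[OF dlen_pos] sum_nonneg flip: ennreal_mult)
  then show ?thesis
    unfolding carleson_def SUP_le_iff
    by (simp add: ennreal_divide_le_iff[OF dlen_pos] nn_integral_count_space_le_iff)
qed

lemma bmo_norm_le_iff:
  assumes "0 \<le> b"
  shows "bmo_norm x \<le> ennreal b \<longleftrightarrow>
    (\<forall>K\<in>dyadic. \<forall>F. finite F \<and> F \<subseteq> {I \<in> dyadic. dsub I K} \<longrightarrow> (\<Sum>I\<in>F. (x I)\<^sup>2 * dlen I) \<le> b\<^sup>2 * dlen K)"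
proof -
  have "(\<Sum>I\<in>F. ennreal ((x I)\<^sup>2 * dlen I)) \<le> ennreal (b\<^sup>2) * ennreal (dlen K) \<longleftrightarrow>
      (\<Sum>I\<in>F. (x I)\<^sup>2 * dlen I) \<le> b\<^sup>2 * dlen K" for F K
    using dlen_pos[of K]
    by (simp add: sum_ennreal less_imp_le[OF dlen_pos] sum_nonneg flip: ennreal_mult)
  then show ?thesis
    unfolding bmo_norm_def SUP_le_iff
    by (simp add: ennsqrt_le_iff[OF assms] ennreal_divide_le_iff[OF dlen_pos] nn_integral_count_space_le_iff)
qed

lemma div_eq_iff_atLeastLessThan:
  assumes "0 < (d::nat)"
  shows "k div d = q \<longleftrightarrow> k \<in> {q * d ..< (q + 1) * d}"
proof
  assume "k div d = q"
  moreover have "k = k div d * d + k mod d" by simp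
  moreover have "k mod d < d" using assms by simp
  ultimately show "k \<in> {q * d ..< (q + 1) * d}" by (simp add: algebra_simps)
next
  assume "k \<in> {q * d ..< (q + 1) * d}"
  then show "k div d = q" by (intro div_nat_eqI) (auto simp: algebra_simps)
qed

lemma card_residues_atLeastLessThan:
  assumes "c \<le> N"
  shows "card {j\<in>{..<N}. \<exists>m\<in>{P..<P + c}. m mod N = j} = c"
proof -
  have "{j\<in>{..<N}. \<exists>m\<in>{P..<P + c}. m mod N = j} = (\<lambda>m. m mod N) ` {P..<P + c}"
    using assms by auto
  moreover have "inj_on (\<lambda>m. m mod N) {P..<P + c}"
  proof -
    have "a = b" if "a \<in> {P..<P + c}" "b \<in> {P..<P + c}" "a \<le> b" "a mod N = b mod N" for a b
    proof (rule ccontr)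
      assume "a \<noteq> b"
      then have "N dvd b - a" "0 < b - a" "b - a < N"
        using that assms mod_eq_dvd_iff_nat[of a b N] by auto
      then show False by (meson nat_dvd_not_less)
    qed
    then show ?thesis
      by (intro inj_onI) (metis nat_le_linear)
  qed
  ultimately show ?thesis by (simp add: card_image)
qed

lemma card_residue_in_interval:
  assumes "0 < N"
  shows "real (card {m\<in>{A..<B}. m mod N = j}) \<le> real (B - A) / N + 2"
proof (cases "A \<le> B")
  case True
  have "inj_on (\<lambda>m. m div N) {m\<in>{A..<B}. m mod N = j}"
  proof (rule inj_onI)
    fix a b assume "a \<in> {m\<in>{A..<B}. m mod N = j}" "b \<in> {m\<in>{A..<B}. m mod N = j}" "a div N = b div N"
    then show "a = b" using div_mult_mod_eq[of a N] div_mult_mod_eq[of b N] by simp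
  qed
  moreover have "(\<lambda>m. m div N) ` {m\<in>{A..<B}. m mod N = j} \<subseteq> {A div N .. B div N}"
  proof (rule image_subsetI)
    fix m assume "m \<in> {m\<in>{A..<B}. m mod N = j}"
    then show "m div N \<in> {A div N .. B div N}"
      using div_le_mono[of A m N] div_le_mono[of m B N] by auto
  qed
  ultimately have "card {m\<in>{A..<B}. m mod N = j} \<le> card {A div N .. B div N}"
    by (intro card_inj_on_le) auto
  then have "real (card {m\<in>{A..<B}. m mod N = j}) \<le> real (B div N) + 1 - real (A div N)"
    using div_le_mono[OF True, of N] by (simp add: of_nat_diff)
  moreover have "real (B div N) \<le> real B / N"
    by (rule of_nat_div_le_of_nat)
  moreover have "real A / N - 1 \<le> real (A div N)"
  proof -
    have "real (A mod N) / N < 1" using assms by simp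
    then show ?thesis using of_nat_of_nat_div_aux[of A N, where 'a=real] by linarith
  qed
  ultimately show ?thesis
    using True by (simp add: of_nat_diff diff_divide_distrib)
qed simp

lemma card_blocks_meeting_residue:
  fixes c :: "nat \<Rightarrow> nat"
  assumes "0 < N"
  shows "real (card {n\<in>{l..L}. \<exists>m\<in>{(\<Sum>i<n. c i)..<(\<Sum>i<Suc n. c i)}. m mod N = j})
           \<le> (\<Sum>n\<in>{l..L}. real (c n)) / N + 2"
proof -
  define Q where "Q n = (\<Sum>i<n. c i)" for n
  define S where "S = {n\<in>{l..L}. \<exists>m\<in>{Q n..<Q (Suc n)}. m mod N = j}"
  have Q_mono: "Q a \<le> Q b" if "a \<le> b" for a b
    unfolding Q_def using that by (intro sum_mono2) auto
  define g where "g n = (SOME m. m \<in> {Q n..<Q (Suc n)} \<and> m mod N = j)" for n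
  have g: "g n \<in> {Q n..<Q (Suc n)} \<and> g n mod N = j" if "n \<in> S" for n
    unfolding g_def by (rule someI_ex) (use that S_def in blast)
  have "g a < g b" if "a \<in> S" "b \<in> S" "a < b" for a b
    using g[OF that(1)] g[OF that(2)] Q_mono[of "Suc a" b] that(3) by auto
  then have "inj_on g S"
    by (intro strict_mono_on_imp_inj_on strict_mono_onI)
  moreover have "g n \<in> {m\<in>{Q l..<Q (Suc L)}. m mod N = j}" if "n \<in> S" for n
  proof -
    have "l \<le> n" "n \<le> L" using that by (auto simp: S_def)
    then show ?thesis using g[OF that] Q_mono[of l n] Q_mono[of "Suc n" "Suc L"] by auto
  qed
  ultimately have "card S \<le> card {m\<in>{Q l..<Q (Suc L)}. m mod N = j}"
    by (intro card_inj_on_le) auto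
  also have "real \<dots> \<le> real (Q (Suc L) - Q l) / N + 2"
    by (rule card_residue_in_interval[OF assms])
  also have "Q (Suc L) - Q l = (\<Sum>n\<in>{l..L}. c n)"
  proof (cases "l \<le> L")
    case True
    then show ?thesis
      using sum.atLeastLessThan_concat[of 0 l "Suc L" c]
      by (simp add: Q_def lessThan_atLeast0 atLeastLessThanSuc_atLeastAtMost)
  qed (simp add: Q_mono)
  finally show ?thesis by (simp add: S_def Q_def)
qed

lemma dsub_refl: "dsub I I"
  by (simp add: dsub_def)

lemma div_power2_div_power2:
  assumes "b \<le> a" "c \<le> b"
  shows "(k::nat) div 2 ^ (a - b) div 2 ^ (b - c) = k div 2 ^ (a - c)"
proof -
  have "(2::nat) ^ (a - c) = 2 ^ (a - b) * 2 ^ (b - c)"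
    using assms by (simp flip: power_add)
  then show ?thesis by (simp add: div_mult2_eq)
qed

lemma dsub_trans: "dsub I J \<Longrightarrow> dsub J K \<Longrightarrow> dsub I K"
  unfolding dsub_def using div_power2_div_power2[of "fst J" "fst I" "fst K" "snd I"] by auto

definition subintervals_at :: "nat \<Rightarrow> dint \<Rightarrow> dint set" where
  "subintervals_at L I = {l. fst l = L \<and> dsub l I}"

lemma subintervals_at_eq:
  assumes "fst I \<le> L"
  shows "subintervals_at L I =
    Pair L ` {snd I * 2 ^ (L - fst I) ..< (snd I + 1) * 2 ^ (L - fst I)}"
  using div_eq_iff_atLeastLessThan[of "2 ^ (L - fst I)"] assms
  unfolding subintervals_at_def dsub_def by (auto simp: image_iff)

lemma finite_subintervals_at: "fst I \<le> L \<Longrightarrow> finite (subintervals_at L I)"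
  by (simp add: subintervals_at_eq)

lemma dlen_eq_sum_subintervals_at:
  assumes "fst I \<le> L"
  shows "dlen I = (\<Sum>l\<in>subintervals_at L I. (1/2::real) ^ L)"
proof -
  have "card (subintervals_at L I) = 2 ^ (L - fst I)"
    unfolding subintervals_at_eq[OF assms]
    by (subst card_image) (auto simp: inj_on_def algebra_simps)
  moreover have "(1/2::real) ^ fst I = 2 ^ (L - fst I) * (1/2) ^ L"
    using assms by (simp add: power_one_over field_simps flip: power_add)
  ultimately show ?thesis by (simp add: dlen_def)
qed

definition ancestor :: "dint \<Rightarrow> nat \<Rightarrow> dint" where
  "ancestor l n = (n, snd l div 2 ^ (fst l - n))"

lemma fst_ancestor [simp]: "fst (ancestor l n) = n"
  by (simp add: ancestor_def)

lemma inj_ancestor: "inj (ancestor l)"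
  by (auto simp: inj_def ancestor_def)

lemma ancestor_ancestor: "m \<le> n \<Longrightarrow> n \<le> fst l \<Longrightarrow> ancestor (ancestor l n) m = ancestor l m"
  by (simp add: ancestor_def div_power2_div_power2)

lemma dsub_between_eq_ancestors:
  assumes "l \<in> subintervals_at L K" "fst K \<le> L"
  shows "{I. dsub l I \<and> dsub I K} = ancestor l ` {fst K..L}"
proof -
  have l: "fst l = L" "snd l div 2 ^ (L - fst K) = snd K"
    using assms(1) by (auto simp: subintervals_at_def dsub_def)
  have "dsub (ancestor l n) K \<longleftrightarrow> fst K \<le> n" if "n \<le> L" for n
    using that l div_power2_div_power2[of n L "fst K" "snd l"] by (auto simp: dsub_def ancestor_def)
  moreover have "dsub l I \<longleftrightarrow> I = ancestor l (fst I) \<and> fst I \<le> L" for I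
    using l by (auto simp: dsub_def ancestor_def prod_eq_iff)
  ultimately show ?thesis
    by (auto simp: image_iff)
qed

lemma sum_dsub_eq_sum_subintervals_at:
  fixes f :: "dint \<Rightarrow> real"
  assumes "finite X" "\<And>I. I \<in> X \<Longrightarrow> fst I \<le> L" "fst K \<le> L"
  shows "(\<Sum>I\<in>{I\<in>X. dsub I K}. f I * dlen I)
       = (\<Sum>l\<in>subintervals_at L K. (1/2) ^ L * (\<Sum>I\<in>{I\<in>X. dsub l I \<and> dsub I K}. f I))"
proof -
  have "subintervals_at L I = {l \<in> subintervals_at L K. dsub l I}" if "dsub I K" for I
    using that dsub_trans[of _ I K] unfolding subintervals_at_def by blast
  then have "(\<Sum>I\<in>{I\<in>X. dsub I K}. f I * dlen I)
      = (\<Sum>I\<in>{I\<in>X. dsub I K}. \<Sum>l\<in>{l \<in> subintervals_at L K. dsub l I}. (1/2) ^ L * f I)"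
    using assms(2) by (intro sum.cong refl) (simp add: dlen_eq_sum_subintervals_at[of _ L] sum_distrib_left mult.commute)
  also have "\<dots> = (\<Sum>l\<in>subintervals_at L K. \<Sum>I\<in>{I\<in>{I\<in>X. dsub I K}. dsub l I}. (1/2) ^ L * f I)"
    by (rule sum.swap_restrict) (use assms finite_subintervals_at in auto)
  also have "\<dots> = (\<Sum>l\<in>subintervals_at L K. (1/2) ^ L * (\<Sum>I\<in>{I\<in>X. dsub l I \<and> dsub I K}. f I))"
    by (simp add: sum_distrib_left conj_ac)
  finally show ?thesis .
qed

(* The blocks {stack_offset c I ..< stack_offset c I + c I} of the intervals of a chain
   ancestor l 0, ancestor l 1, ... are consecutive and disjoint. *)
definition stack_offset :: "(dint \<Rightarrow> nat) \<Rightarrow> dint \<Rightarrow> nat" where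
  "stack_offset c I = (\<Sum>m<fst I. c (ancestor I m))"

definition residue_class :: "nat \<Rightarrow> (dint \<Rightarrow> nat) \<Rightarrow> nat \<Rightarrow> dint set" where
  "residue_class N c j =
    {I. \<exists>m\<in>{stack_offset c I..<stack_offset c I + c I}. m mod N = j}"

lemma residue_class_subset: "residue_class N c j \<subseteq> {I. c I \<noteq> 0}"
  by (auto simp: residue_class_def)

lemma card_residue_class_mem:
  "c I \<le> N \<Longrightarrow> card {j\<in>{..<N}. I \<in> residue_class N c j} = c I"
  unfolding residue_class_def mem_Collect_eq by (rule card_residues_atLeastLessThan)

lemma stack_offset_ancestor:
  "n \<le> fst l \<Longrightarrow> stack_offset c (ancestor l n) = (\<Sum>m<n. c (ancestor l m))"
  unfolding stack_offset_def by (intro sum.cong) (auto simp: ancestor_ancestor)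

lemma card_residue_class_between:
  assumes "0 < N" "l \<in> subintervals_at L K" "fst K \<le> L"
  shows "real (card {I\<in>residue_class N c j. dsub l I \<and> dsub I K})
           \<le> (\<Sum>I\<in>{I. dsub l I \<and> dsub I K}. real (c I)) / N + 2"
proof -
  define hits where "hits n \<longleftrightarrow>
    (\<exists>m\<in>{(\<Sum>i<n. c (ancestor l i))..<(\<Sum>i<Suc n. c (ancestor l i))}. m mod N = j)" for n
  have l_level: "fst l = L" using assms(2) by (simp add: subintervals_at_def)
  have inj: "inj_on (ancestor l) A" for A
    by (rule inj_on_subset[OF inj_ancestor subset_UNIV])
  have chain: "{I. dsub l I \<and> dsub I K} = ancestor l ` {fst K..L}"
    by (rule dsub_between_eq_ancestors[OF assms(2,3)])
  have mem: "ancestor l n \<in> residue_class N c j \<longleftrightarrow> hits n" if "n \<le> L" for n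
    using that l_level by (simp add: residue_class_def stack_offset_ancestor hits_def)
  have "{I\<in>residue_class N c j. dsub l I \<and> dsub I K}
      = residue_class N c j \<inter> ancestor l ` {fst K..L}"
    by (auto simp flip: chain)
  also have "\<dots> = ancestor l ` {n\<in>{fst K..L}. hits n}"
    using mem by auto
  finally have "card {I\<in>residue_class N c j. dsub l I \<and> dsub I K} = card {n\<in>{fst K..L}. hits n}"
    by (simp add: card_image[OF inj])
  moreover have "(\<Sum>I\<in>{I. dsub l I \<and> dsub I K}. real (c I))
      = (\<Sum>n\<in>{fst K..L}. real (c (ancestor l n)))"
    unfolding chain by (rule sum.reindex[OF inj, unfolded comp_def])
  ultimately show ?thesis
    using card_blocks_meeting_residue[OF assms(1),
        where c="\<lambda>n. c (ancestor l n)" and l="fst K" and L=L and j=j]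
    by (simp add: hits_def)
qed

lemma residue_class_packing:
  assumes "0 < N" "finite S" "\<And>I. I \<notin> S \<Longrightarrow> c I = 0"
  shows "(\<Sum>I\<in>{I\<in>residue_class N c j. dsub I K}. dlen I)
           \<le> 2 * dlen K + (\<Sum>I\<in>{I\<in>S. dsub I K}. real (c I) * dlen I) / N"
proof -
  define R where "R = residue_class N c j"
  define L where "L = fst K + (\<Sum>I\<in>S. fst I)"
  have S_level: "fst I \<le> L" if "I \<in> S" for I
    using that assms(2) unfolding L_def by (simp add: member_le_sum trans_le_add2)
  have K_level: "fst K \<le> L"
    unfolding L_def by simp
  have R_sub: "R \<subseteq> S"
    using assms(3) residue_class_subset unfolding R_def by blast
  have leaf_count: "real (card {I\<in>R. dsub l I \<and> dsub I K})
      \<le> 2 + (\<Sum>I\<in>{I\<in>S. dsub l I \<and> dsub I K}. real (c I)) / N"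
    if l: "l \<in> subintervals_at L K" for l
  proof -
    have "(\<Sum>I\<in>{I. dsub l I \<and> dsub I K}. real (c I)) = (\<Sum>I\<in>{I\<in>S. dsub l I \<and> dsub I K}. real (c I))"
      using assms(3) dsub_between_eq_ancestors[OF l K_level]
      by (intro sum.mono_neutral_right) (auto, metis neq0_conv)
    then show ?thesis
      using card_residue_class_between[OF assms(1) l K_level, of c j] by (simp add: R_def)
  qed
  have "(\<Sum>I\<in>{I\<in>R. dsub I K}. dlen I)
      = (\<Sum>l\<in>subintervals_at L K. (1/2) ^ L * real (card {I\<in>R. dsub l I \<and> dsub I K}))"
    using sum_dsub_eq_sum_subintervals_at[of R L K "\<lambda>_. 1"] finite_subset[OF R_sub assms(2)]
      R_sub S_level K_level by auto
  also have "\<dots> \<le> (\<Sum>l\<in>subintervals_at L K.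
      (1/2) ^ L * (2 + (\<Sum>I\<in>{I\<in>S. dsub l I \<and> dsub I K}. real (c I)) / N))"
    using leaf_count by (intro sum_mono mult_left_mono) auto
  also have "\<dots> = 2 * (\<Sum>l\<in>subintervals_at L K. (1/2) ^ L)
      + (\<Sum>l\<in>subintervals_at L K. (1/2) ^ L * (\<Sum>I\<in>{I\<in>S. dsub l I \<and> dsub I K}. real (c I))) / N"
    by (simp add: algebra_simps sum.distrib sum_distrib_left sum_divide_distrib)
  also have "\<dots> = 2 * dlen K + (\<Sum>I\<in>{I\<in>S. dsub I K}. real (c I) * dlen I) / N"
    using dlen_eq_sum_subintervals_at[OF K_level] sum_dsub_eq_sum_subintervals_at[OF assms(2) S_level K_level]
    by simp
  finally show ?thesis by (simp add: R_def)
qed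

lemma residue_class_packing_le_three:
  fixes w :: "dint \<Rightarrow> real"
  assumes N: "0 < N" and "finite G" "\<And>I. I \<notin> G \<Longrightarrow> c I = 0"
    and c_le: "\<And>I. I \<in> G \<Longrightarrow> real (c I) \<le> N * w I"
    and w_packing: "(\<Sum>I\<in>{I\<in>G. dsub I K}. w I * dlen I) \<le> dlen K"
  shows "(\<Sum>I\<in>{I\<in>residue_class N c j. dsub I K}. dlen I) \<le> 3 * dlen K"
proof -
  have "(\<Sum>I\<in>{I\<in>G. dsub I K}. real (c I) * dlen I) \<le> N * (\<Sum>I\<in>{I\<in>G. dsub I K}. w I * dlen I)"
    unfolding sum_distrib_left mult.assoc[symmetric]
    using c_le by (intro sum_mono mult_right_mono) (auto simp: less_imp_le[OF dlen_pos])
  then have "(\<Sum>I\<in>{I\<in>G. dsub I K}. real (c I) * dlen I) / N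
      \<le> (\<Sum>I\<in>{I\<in>G. dsub I K}. w I * dlen I)"
    using N by (simp add: divide_le_eq mult.commute)
  then show ?thesis
    using residue_class_packing[of N G c j K, OF N assms(2,3)] w_packing by linarith
qed

lemma sum_sum_residue_classes:
  fixes \<nu> :: "dint \<Rightarrow> real"
  assumes "finite S" "\<And>I. I \<notin> S \<Longrightarrow> c I = 0" "\<And>I. c I \<le> N"
  shows "(\<Sum>j<N. sum \<nu> (residue_class N c j)) = (\<Sum>I\<in>S. real (c I) * \<nu> I)"
proof -
  have "residue_class N c j = {I\<in>S. I \<in> residue_class N c j}" for j
    using assms(2) residue_class_subset by blast
  then have "(\<Sum>j<N. sum \<nu> (residue_class N c j)) = (\<Sum>j<N. \<Sum>I\<in>{I\<in>S. I \<in> residue_class N c j}. \<nu> I)"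
    by simp
  also have "\<dots> = (\<Sum>I\<in>S. \<Sum>j\<in>{j\<in>{..<N}. I \<in> residue_class N c j}. \<nu> I)"
    by (rule sum.swap_restrict) (use assms(1) in auto)
  also have "\<dots> = (\<Sum>I\<in>S. real (c I) * \<nu> I)"
    using card_residue_class_mem[OF assms(3)] by simp
  finally show ?thesis .
qed

lemma weight_le_of_packing:
  fixes w :: "dint \<Rightarrow> real"
  assumes "finite G" "I \<in> G" "\<And>I. I \<in> G \<Longrightarrow> 0 \<le> w I"
    and "(\<Sum>I'\<in>{I'\<in>G. dsub I' I}. w I' * dlen I') \<le> a * dlen I"
  shows "w I \<le> a"
proof -
  have "w I * dlen I \<le> (\<Sum>I'\<in>{I'\<in>G. dsub I' I}. w I' * dlen I')"
    using assms(1-3) by (intro member_le_sum) (auto simp: dsub_refl less_imp_le[OF dlen_pos])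
  then show ?thesis
    using assms(4) dlen_pos[of I] by (meson mult_right_le_imp_le order_trans)
qed

lemma sum_mult_le_add_divide_of_packed_subsets:
  fixes w \<nu> :: "dint \<Rightarrow> real" and N :: nat
  assumes N: "0 < N" and G: "finite G" "G \<subseteq> dyadic"
    and w_nonneg: "\<And>I. I \<in> G \<Longrightarrow> 0 \<le> w I"
    and w_packing: "\<And>K. K \<in> dyadic \<Longrightarrow> (\<Sum>I\<in>{I\<in>G. dsub I K}. w I * dlen I) \<le> dlen K"
    and \<nu>_nonneg: "\<And>I. I \<in> G \<Longrightarrow> 0 \<le> \<nu> I"
    and packed_bound: "\<And>E. E \<subseteq> G \<Longrightarrow>
      (\<And>K. K \<in> dyadic \<Longrightarrow> (\<Sum>I\<in>{I\<in>E. dsub I K}. dlen I) \<le> 3 * dlen K) \<Longrightarrow> sum \<nu> E \<le> B"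
  shows "(\<Sum>I\<in>G. w I * \<nu> I) \<le> B + sum \<nu> G / N"
proof -
  define c where "c I = (if I \<in> G then nat \<lfloor>N * w I\<rfloor> else 0)" for I
  have c_le: "real (c I) \<le> N * w I" and c_ge: "N * w I - 1 \<le> real (c I)" if "I \<in> G" for I
    using that w_nonneg[OF that] by (simp_all add: c_def)
  have c_le_N: "c I \<le> N" for I
  proof (cases "I \<in> G")
    case True
    then have "w I \<le> 1"
      using weight_le_of_packing[of G I w 1] G w_nonneg w_packing[of I] by auto
    then have "N * w I \<le> N" by (simp add: mult_left_le)
    then show ?thesis using c_le[OF True] by linarith
  qed (simp add: c_def)
  have c_supp: "c I = 0" if "I \<notin> G" for I
    using that by (simp add: c_def)
  have "sum \<nu> (residue_class N c j) \<le> B" for j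
  proof (rule packed_bound)
    show "residue_class N c j \<subseteq> G"
      using residue_class_subset c_supp by blast
    show "(\<Sum>I\<in>{I\<in>residue_class N c j. dsub I K}. dlen I) \<le> 3 * dlen K" if "K \<in> dyadic" for K
      by (rule residue_class_packing_le_three[of N G c w, OF N G(1) c_supp c_le w_packing[OF that]])
  qed
  then have "(\<Sum>I\<in>G. real (c I) * \<nu> I) \<le> N * B"
    using sum_sum_residue_classes[of G c N \<nu>, OF G(1) c_supp c_le_N]
      sum_mono[of "{..<N}" "\<lambda>j. sum \<nu> (residue_class N c j)" "\<lambda>_. B"] by simp
  moreover have "(\<Sum>I\<in>G. (N * w I - 1) * \<nu> I) \<le> (\<Sum>I\<in>G. real (c I) * \<nu> I)"
    using c_ge \<nu>_nonneg by (intro sum_mono mult_right_mono) auto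
  moreover have "(\<Sum>I\<in>G. (N * w I - 1) * \<nu> I) = N * (\<Sum>I\<in>G. w I * \<nu> I) - sum \<nu> G"
    by (simp add: algebra_simps sum_subtractf sum_distrib_left)
  ultimately show ?thesis
    using N by (simp add: field_simps)
qed

lemma sum_mult_le_of_packed_subsets:
  fixes w \<nu> :: "dint \<Rightarrow> real"
  assumes "finite G" "G \<subseteq> dyadic"
    and "\<And>I. I \<in> G \<Longrightarrow> 0 \<le> w I"
    and "\<And>K. K \<in> dyadic \<Longrightarrow> (\<Sum>I\<in>{I\<in>G. dsub I K}. w I * dlen I) \<le> dlen K"
    and \<nu>_nonneg: "\<And>I. I \<in> G \<Longrightarrow> 0 \<le> \<nu> I"
    and "\<And>E. E \<subseteq> G \<Longrightarrow>
      (\<And>K. K \<in> dyadic \<Longrightarrow> (\<Sum>I\<in>{I\<in>E. dsub I K}. dlen I) \<le> 3 * dlen K) \<Longrightarrow> sum \<nu> E \<le> B"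
  shows "(\<Sum>I\<in>G. w I * \<nu> I) \<le> B"
proof (rule field_le_epsilon)
  fix e :: real assume "0 < e"
  then obtain N :: nat where "sum \<nu> G < N * e"
    using reals_Archimedean3 by blast
  moreover have "0 \<le> sum \<nu> G"
    using \<nu>_nonneg by (simp add: sum_nonneg)
  ultimately have "0 < N" "sum \<nu> G / N < e"
    using \<open>0 < e\<close> by (auto simp: divide_less_eq mult.commute intro: Nat.gr0I)
  moreover have "(\<Sum>I\<in>G. w I * \<nu> I) \<le> B + sum \<nu> G / N"
    using \<open>0 < N\<close> assms by (rule sum_mult_le_add_divide_of_packed_subsets)
  ultimately show "(\<Sum>I\<in>G. w I * \<nu> I) \<le> B + e"
    by linarith
qed

lemma rearr_op_apply: "inj_on \<tau> dyadic \<Longrightarrow> I \<in> dyadic \<Longrightarrow> rearr_op \<tau> x (\<tau> I) = x I"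
  by (simp add: rearr_op_def)

lemma rearr_op_indicator:
  assumes "inj_on \<tau> dyadic" "E \<subseteq> dyadic"
  shows "rearr_op \<tau> (indicator E) = (indicator (\<tau> ` E) :: dint \<Rightarrow> real)"
proof
  fix J
  show "rearr_op \<tau> (indicator E) J = (indicator (\<tau> ` E) J :: real)"
  proof (cases "J \<in> \<tau> ` dyadic")
    case True
    then obtain I where "I \<in> dyadic" "J = \<tau> I" by blast
    then show ?thesis
      using assms by (auto simp: rearr_op_apply indicator_def inj_on_image_mem_iff)
  qed (use assms in \<open>auto simp: rearr_op_def indicator_def\<close>)
qed

lemma sum_rearr_op_sq:
  assumes "inj_on \<tau> dyadic" "finite F"
  shows "(\<Sum>I\<in>F. (rearr_op \<tau> x I)\<^sup>2 * dlen I) = (\<Sum>I\<in>{I\<in>dyadic. \<tau> I \<in> F}. (x I)\<^sup>2 * dlen (\<tau> I))"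
proof -
  let ?G = "{I\<in>dyadic. \<tau> I \<in> F}"
  have inj_G: "inj_on \<tau> ?G"
    using assms(1) by (rule inj_on_subset) auto
  have "(\<Sum>I\<in>F. (rearr_op \<tau> x I)\<^sup>2 * dlen I) = (\<Sum>I\<in>\<tau> ` ?G. (rearr_op \<tau> x I)\<^sup>2 * dlen I)"
    using assms(2) by (intro sum.mono_neutral_right) (auto simp: rearr_op_def)
  also have "\<dots> = (\<Sum>I\<in>?G. (x I)\<^sup>2 * dlen (\<tau> I))"
    using assms(1) by (simp add: sum.reindex[OF inj_G] rearr_op_apply)
  finally show ?thesis .
qed

lemma bmo_norm_indicator_le_iff:
  assumes "0 \<le> b"
  shows "bmo_norm (indicator E) \<le> ennreal b \<longleftrightarrow> carleson E \<le> ennreal (b\<^sup>2)"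
proof -
  have sum_indicator: "(\<Sum>I\<in>F. (indicator E I :: real)\<^sup>2 * dlen I) = (\<Sum>I\<in>F \<inter> E. dlen I)"
    if "finite F" for F
    using that by (auto simp: sum.inter_restrict indicator_def intro!: sum.cong)
  show ?thesis
    unfolding bmo_norm_le_iff[OF assms] carleson_le_iff[OF zero_le_power2]
  proof (intro iffI ballI allI impI)
    fix K F
    assume bmo: "\<forall>K\<in>dyadic. \<forall>F. finite F \<and> F \<subseteq> {I \<in> dyadic. dsub I K} \<longrightarrow>
        (\<Sum>I\<in>F. (indicator E I)\<^sup>2 * dlen I) \<le> b\<^sup>2 * dlen K"
      and K: "K \<in> dyadic" and F: "finite F \<and> F \<subseteq> {I \<in> E \<inter> dyadic. dsub I K}"
    have "(\<Sum>I\<in>F. (indicator E I)\<^sup>2 * dlen I) \<le> b\<^sup>2 * dlen K"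
      using F by (intro bmo[rule_format, OF K]) auto
    moreover have "F \<inter> E = F" using F by blast
    ultimately show "(\<Sum>I\<in>F. dlen I) \<le> b\<^sup>2 * dlen K"
      using sum_indicator F by simp
  next
    fix K F
    assume carl: "\<forall>K\<in>dyadic. \<forall>F. finite F \<and> F \<subseteq> {I \<in> E \<inter> dyadic. dsub I K} \<longrightarrow>
        (\<Sum>I\<in>F. dlen I) \<le> b\<^sup>2 * dlen K"
      and K: "K \<in> dyadic" and F: "finite F \<and> F \<subseteq> {I \<in> dyadic. dsub I K}"
    have "(\<Sum>I\<in>F \<inter> E. dlen I) \<le> b\<^sup>2 * dlen K"
      using F by (intro carl[rule_format, OF K]) auto
    then show "(\<Sum>I\<in>F. (indicator E I)\<^sup>2 * dlen I) \<le> b\<^sup>2 * dlen K"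
      using sum_indicator F by simp
  qed
qed

lemma carleson_image_le_of_bmo_bounded:
  assumes inj: "inj_on \<tau> dyadic" and "0 \<le> C"
    and bounded: "\<forall>x \<in> BMO. bmo_norm (rearr_op \<tau> x) \<le> ennreal C * bmo_norm x"
    and E: "E \<subseteq> dyadic"
  shows "carleson (\<tau> ` E) \<le> ennreal (max 1 (C\<^sup>2)) * carleson E"
proof (cases "carleson E = \<infinity>")
  case True
  then show ?thesis by (simp add: ennreal_mult_top)
next
  case False
  define \<kappa> where "\<kappa> = enn2real (carleson E)"
  have "0 \<le> \<kappa>" and carleson_E: "carleson E = ennreal \<kappa>"
    using False by (simp_all add: \<kappa>_def less_top[symmetric])
  then have "bmo_norm (indicator E) \<le> ennreal (sqrt \<kappa>)"
    by (simp add: bmo_norm_indicator_le_iff)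
  then have "indicator E \<in> BMO"
    by (auto simp: BMO_def top_unique intro: le_less_trans)
  then have "bmo_norm (indicator (\<tau> ` E)) \<le> ennreal C * bmo_norm (indicator E)"
    using bounded by (simp flip: rearr_op_indicator[OF inj E])
  also have "\<dots> \<le> ennreal (C * sqrt \<kappa>)"
    using \<open>bmo_norm (indicator E) \<le> ennreal (sqrt \<kappa>)\<close> \<open>0 \<le> C\<close>
    by (simp add: ennreal_mult' mult_left_mono)
  finally have "carleson (\<tau> ` E) \<le> ennreal (C\<^sup>2 * \<kappa>)"
    using \<open>0 \<le> C\<close> \<open>0 \<le> \<kappa>\<close> by (simp add: bmo_norm_indicator_le_iff power_mult_distrib)
  also have "\<dots> \<le> ennreal (max 1 (C\<^sup>2)) * carleson E"
    using \<open>0 \<le> \<kappa>\<close> by (simp add: carleson_E mult_right_mono flip: ennreal_mult)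
  finally show ?thesis .
qed

lemma sum_image_dlen_le_of_packed:
  assumes into: "\<tau> ` dyadic \<subseteq> dyadic" and inj: "inj_on \<tau> dyadic"
    and small: "\<forall>E \<subseteq> dyadic. carleson E \<le> 4 \<longrightarrow> carleson (\<tau> ` E) \<le> ennreal M" and "0 \<le> M"
    and J: "J \<in> dyadic" and E: "finite E" "E \<subseteq> dyadic" "\<And>I. I \<in> E \<Longrightarrow> dsub (\<tau> I) J"
    and packed: "\<And>K. K \<in> dyadic \<Longrightarrow> (\<Sum>I\<in>{I\<in>E. dsub I K}. dlen I) \<le> 3 * dlen K"
  shows "(\<Sum>I\<in>E. dlen (\<tau> I)) \<le> M * dlen J"
proof -
  have "carleson E \<le> ennreal 3"
    unfolding carleson_le_iff[of 3, OF zero_le_numeral]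
  proof (intro ballI allI impI)
    fix K F assume K: "K \<in> dyadic" and F: "finite F \<and> F \<subseteq> {I \<in> E \<inter> dyadic. dsub I K}"
    then have "(\<Sum>I\<in>F. dlen I) \<le> (\<Sum>I\<in>{I\<in>E. dsub I K}. dlen I)"
      using E(1) by (intro sum_mono2) (auto simp: less_imp_le[OF dlen_pos])
    also have "\<dots> \<le> 3 * dlen K" by (rule packed[OF K])
    finally show "(\<Sum>I\<in>F. dlen I) \<le> 3 * dlen K" .
  qed
  also have "ennreal 3 \<le> 4" by simp
  finally have "carleson (\<tau> ` E) \<le> ennreal M"
    by (rule small[rule_format, OF E(2)])
  moreover have "finite (\<tau> ` E) \<and> \<tau> ` E \<subseteq> {I \<in> \<tau> ` E \<inter> dyadic. dsub I J}"
    using E into by blast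
  ultimately have "(\<Sum>I\<in>\<tau> ` E. dlen I) \<le> M * dlen J"
    unfolding carleson_le_iff[OF \<open>0 \<le> M\<close>] using J by blast
  then show ?thesis
    using inj_on_subset[OF inj E(2)] by (simp add: sum.reindex)
qed

lemma sum_weighted_image_dlen_le:
  fixes w :: "dint \<Rightarrow> real"
  assumes into: "\<tau> ` dyadic \<subseteq> dyadic" and inj: "inj_on \<tau> dyadic"
    and small: "\<forall>E \<subseteq> dyadic. carleson E \<le> 4 \<longrightarrow> carleson (\<tau> ` E) \<le> ennreal M" and "0 \<le> M"
    and J: "J \<in> dyadic" and G: "finite G" "G \<subseteq> dyadic" "\<And>I. I \<in> G \<Longrightarrow> dsub (\<tau> I) J"
    and w_nonneg: "\<And>I. I \<in> G \<Longrightarrow> 0 \<le> w I" and "0 \<le> a"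
    and w_packing: "\<And>K. K \<in> dyadic \<Longrightarrow> (\<Sum>I\<in>{I\<in>G. dsub I K}. w I * dlen I) \<le> a * dlen K"
  shows "(\<Sum>I\<in>G. w I * dlen (\<tau> I)) \<le> a * M * dlen J"
proof (cases "a = 0")
  case True
  have "w I = 0" if "I \<in> G" for I
    using weight_le_of_packing[of G I w 0, OF G(1) that w_nonneg] w_packing[of I] G(2)
      w_nonneg[OF that] that True
    by auto
  then show ?thesis using True by simp
next
  case False
  then have "0 < a" using \<open>0 \<le> a\<close> by simp
  have "(\<Sum>I\<in>G. w I / a * dlen (\<tau> I)) \<le> M * dlen J"
  proof (rule sum_mult_le_of_packed_subsets[OF G(1,2)])
    show "0 \<le> w I / a" if "I \<in> G" for I using w_nonneg[OF that] \<open>0 < a\<close> by simp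
    show "0 \<le> dlen (\<tau> I)" for I by (rule less_imp_le[OF dlen_pos])
    show "(\<Sum>I\<in>{I\<in>G. dsub I K}. w I / a * dlen I) \<le> dlen K" if "K \<in> dyadic" for K
      using w_packing[OF that] \<open>0 < a\<close>
      by (simp add: sum_divide_distrib[symmetric] divide_le_eq mult.commute)
    show "(\<Sum>I\<in>E. dlen (\<tau> I)) \<le> M * dlen J"
      if "E \<subseteq> G" "\<And>K. K \<in> dyadic \<Longrightarrow> (\<Sum>I\<in>{I\<in>E. dsub I K}. dlen I) \<le> 3 * dlen K" for E
      using that G finite_subset by (intro sum_image_dlen_le_of_packed[OF into inj small \<open>0 \<le> M\<close> J]) auto
  qed
  then show ?thesis
    using \<open>0 < a\<close> by (simp add: sum_divide_distrib[symmetric] divide_le_eq mult.commute mult.left_commute)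
qed

lemma bmo_norm_rearr_op_le_of_small_images:
  assumes into: "\<tau> ` dyadic \<subseteq> dyadic" and inj: "inj_on \<tau> dyadic"
    and small: "\<forall>E \<subseteq> dyadic. carleson E \<le> 4 \<longrightarrow> carleson (\<tau> ` E) \<le> ennreal M" and "0 \<le> M"
    and "x \<in> BMO"
  shows "bmo_norm (rearr_op \<tau> x) \<le> ennreal (sqrt M) * bmo_norm x"
proof -
  define \<beta> where "\<beta> = enn2real (bmo_norm x)"
  have "0 \<le> \<beta>" and bmo_x: "bmo_norm x = ennreal \<beta>"
    using \<open>x \<in> BMO\<close> by (simp_all add: \<beta>_def BMO_def less_top[symmetric])
  have bmo_x_le: "\<forall>K\<in>dyadic. \<forall>F. finite F \<and> F \<subseteq> {I \<in> dyadic. dsub I K} \<longrightarrow>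
      (\<Sum>I\<in>F. (x I)\<^sup>2 * dlen I) \<le> \<beta>\<^sup>2 * dlen K"
    using bmo_norm_le_iff[OF \<open>0 \<le> \<beta>\<close>, of x] by (simp add: bmo_x)
  have "bmo_norm (rearr_op \<tau> x) \<le> ennreal (sqrt M * \<beta>)"
    unfolding bmo_norm_le_iff[OF mult_nonneg_nonneg[OF real_sqrt_ge_zero[OF \<open>0 \<le> M\<close>] \<open>0 \<le> \<beta>\<close>]]
  proof (intro ballI allI impI)
    fix K F assume K: "K \<in> dyadic" and F: "finite F \<and> F \<subseteq> {I \<in> dyadic. dsub I K}"
    define G where "G = {I\<in>dyadic. \<tau> I \<in> F}"
    have "finite G"
      unfolding G_def using F finite_vimage_IntI[of F \<tau> dyadic] inj by (simp add: Int_def conj_commute)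
    have weighted: "(\<Sum>I\<in>G. (x I)\<^sup>2 * dlen (\<tau> I)) \<le> \<beta>\<^sup>2 * M * dlen K"
    proof (rule sum_weighted_image_dlen_le[OF into inj small \<open>0 \<le> M\<close> K \<open>finite G\<close>,
          where w="\<lambda>I. (x I)\<^sup>2" and a="\<beta>\<^sup>2"])
      show "(\<Sum>I\<in>{I\<in>G. dsub I K'}. (x I)\<^sup>2 * dlen I) \<le> \<beta>\<^sup>2 * dlen K'" if K': "K' \<in> dyadic" for K'
      proof (rule bmo_x_le[rule_format, OF K'])
        have "finite {I\<in>G. dsub I K'}"
          by (rule finite_subset[OF _ \<open>finite G\<close>]) blast
        then show "finite {I\<in>G. dsub I K'} \<and> {I\<in>G. dsub I K'} \<subseteq> {I\<in>dyadic. dsub I K'}"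
          by (auto simp: G_def)
      qed
      show "G \<subseteq> dyadic" by (auto simp: G_def)
      show "dsub (\<tau> I) K" if "I \<in> G" for I using that F by (auto simp: G_def)
    qed simp_all
    have "(\<Sum>I\<in>F. (rearr_op \<tau> x I)\<^sup>2 * dlen I) = (\<Sum>I\<in>G. (x I)\<^sup>2 * dlen (\<tau> I))"
      unfolding G_def using F by (intro sum_rearr_op_sq[OF inj]) simp
    also have "\<dots> \<le> \<beta>\<^sup>2 * M * dlen K" by (rule weighted)
    also have "\<dots> = (sqrt M * \<beta>)\<^sup>2 * dlen K"
      using \<open>0 \<le> M\<close> by (simp add: power_mult_distrib)
    finally show "(\<Sum>I\<in>F. (rearr_op \<tau> x I)\<^sup>2 * dlen I) \<le> (sqrt M * \<beta>)\<^sup>2 * dlen K" .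
  qed
  then show ?thesis
    by (simp add: bmo_x ennreal_mult'' \<open>0 \<le> \<beta>\<close>)
qed

theorem proposition2:
  fixes \<tau> :: "dint \<Rightarrow> dint"
  assumes "\<tau> ` dyadic \<subseteq> dyadic" and "inj_on \<tau> dyadic"
  shows "((\<exists>C::real. C \<ge> 0 \<and> (\<forall>x \<in> BMO. bmo_norm (rearr_op \<tau> x) \<le> ennreal C * bmo_norm x))
          \<longleftrightarrow> (\<exists>M::real. M \<ge> 1 \<and> (\<forall>E \<subseteq> dyadic. carleson (\<tau> ` E) \<le> ennreal M * carleson E)))
       \<and> ((\<exists>M::real. M \<ge> 1 \<and> (\<forall>E \<subseteq> dyadic. carleson (\<tau> ` E) \<le> ennreal M * carleson E))
          \<longleftrightarrow> (\<exists>M::real. M \<ge> 1 \<and> (\<forall>E \<subseteq> dyadic. carleson E \<le> 4 \<longrightarrow> carleson (\<tau> ` E) \<le> ennreal M)))"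
proof -
  let ?i = "\<exists>C::real. C \<ge> 0 \<and> (\<forall>x \<in> BMO. bmo_norm (rearr_op \<tau> x) \<le> ennreal C * bmo_norm x)"
  let ?ii = "\<exists>M::real. M \<ge> 1 \<and> (\<forall>E \<subseteq> dyadic. carleson (\<tau> ` E) \<le> ennreal M * carleson E)"
  let ?iii = "\<exists>M::real. M \<ge> 1 \<and> (\<forall>E \<subseteq> dyadic. carleson E \<le> 4 \<longrightarrow> carleson (\<tau> ` E) \<le> ennreal M)"
  have ?ii if ?i
  proof -
    from that obtain C where "0 \<le> C" "\<forall>x \<in> BMO. bmo_norm (rearr_op \<tau> x) \<le> ennreal C * bmo_norm x"
      by blast
    then show ?ii
      using carleson_image_le_of_bmo_bounded[OF assms(2)] by (intro exI[of _ "max 1 (C\<^sup>2)"]) auto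
  qed
  moreover have ?iii if ?ii
  proof -
    from that obtain M where "1 \<le> M" and image_le: "\<forall>E \<subseteq> dyadic. carleson (\<tau> ` E) \<le> ennreal M * carleson E"
      by blast
    have "carleson (\<tau> ` E) \<le> ennreal (M * 4)" if "E \<subseteq> dyadic" "carleson E \<le> 4" for E
      using image_le that mult_left_mono[OF \<open>carleson E \<le> 4\<close>, of "ennreal M"]
      by (auto simp: ennreal_mult'' intro: order_trans)
    with \<open>1 \<le> M\<close> show ?iii by (intro exI[of _ "M * 4"]) auto
  qed
  moreover have ?i if ?iii
  proof -
    from that obtain M where "1 \<le> M"
      and small: "\<forall>E \<subseteq> dyadic. carleson E \<le> 4 \<longrightarrow> carleson (\<tau> ` E) \<le> ennreal M"
      by blast
    then show ?i
      using bmo_norm_rearr_op_le_of_small_images[OF assms small] by (intro exI[of _ "sqrt M"]) auto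
  qed
  ultimately show ?thesis by blast
qed

end
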